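(* Let $K$ be a field of characteristic $0$, $\eta\in K\setminus\{0\}$ not a root of unity, and $A=A_\eta=A(\alpha,-\eta,1)$ with $\alpha=1+\eta$. Then $A$ has infinitely many pairwise non-isomorphic simple lowest weight modules $W(\kappa)$, $\kappa\in K$.
   Context: The down-up algebra $A(\alpha,\beta,\gamma)$ is the $K$-algebra generated by $d,u$ with relations $d^2u=\alpha dud+\beta ud^2+\gamma d$ and $du^2=\alpha udu+\beta u^2d+\gamma u$. For $\kappa\in K$ define $\kappa_{-1}=0$, $\kappa_0=\kappa$ and $\kappa_n=\eta^{-1}(\alpha\kappa_{n-1}-\kappa_{n-2}+1)$ for $n>0$. The module $W(\kappa)$ has $K$-basis $\{a_n\}_{n\ge0}$ with $u\cdot a_0=0$, $u\cdot a_n=\kappa_{n-1}a_{n-1}$ for $n\ge1$, and $d\cdot a_n=a_{n+1}$. *)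

theory Defs
  imports Main
begin

text \<open>The sequence kappa_n (with kappa_{-1} = 0, kappa_0 = kappa).\<close>
fun kseq :: "'a::field \<Rightarrow> 'a \<Rightarrow> 'a \<Rightarrow> nat \<Rightarrow> 'a" where
  "kseq \<eta> \<alpha> \<kappa> 0 = \<kappa>"
| "kseq \<eta> \<alpha> \<kappa> (Suc 0) = inverse \<eta> * (\<alpha> * \<kappa> - 0 + 1)"
| "kseq \<eta> \<alpha> \<kappa> (Suc (Suc n)) =
     inverse \<eta> * (\<alpha> * kseq \<eta> \<alpha> \<kappa> (Suc n) - kseq \<eta> \<alpha> \<kappa> n + 1)"

text \<open>Underlying vector space of W(kappa): finitely supported coefficient sequences
  w.r.t. the basis a_0, a_1, ... (f n = coefficient of a_n).\<close>
definition Wsp :: "(nat \<Rightarrow> 'a::field) set" where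
  "Wsp = {f. finite {n. f n \<noteq> 0}}"

text \<open>d . a_n = a_{n+1}\<close>
definition Wd :: "(nat \<Rightarrow> 'a::field) \<Rightarrow> nat \<Rightarrow> 'a" where
  "Wd f n = (if n = 0 then 0 else f (n - 1))"

text \<open>u . a_0 = 0, u . a_n = kappa_{n-1} a_{n-1}\<close>
definition Wu :: "'a::field \<Rightarrow> 'a \<Rightarrow> 'a \<Rightarrow> (nat \<Rightarrow> 'a) \<Rightarrow> nat \<Rightarrow> 'a" where
  "Wu \<eta> \<alpha> \<kappa> f n = kseq \<eta> \<alpha> \<kappa> n * f (Suc n)"

definition subspace_of :: "(nat \<Rightarrow> 'a::field) set \<Rightarrow> bool" where
  "subspace_of V \<longleftrightarrow> (\<lambda>n. 0) \<in> V \<and> (\<forall>x\<in>V. \<forall>y\<in>V. (\<lambda>n. x n + y n) \<in> V) \<and> (\<forall>c. \<forall>x\<in>V. (\<lambda>n. c * x n) \<in> V)"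

definition lin_on :: "(nat \<Rightarrow> 'a::field) set \<Rightarrow> ((nat \<Rightarrow> 'a) \<Rightarrow> (nat \<Rightarrow> 'a)) \<Rightarrow> bool" where
  "lin_on V T \<longleftrightarrow> (\<forall>x\<in>V. \<forall>y\<in>V. T (\<lambda>n. x n + y n) = (\<lambda>n. T x n + T y n)) \<and>
                 (\<forall>c. \<forall>x\<in>V. T (\<lambda>n. c * x n) = (\<lambda>n. c * T x n))"

definition downup_module ::
  "'a::field \<Rightarrow> 'a \<Rightarrow> 'a \<Rightarrow> (nat \<Rightarrow> 'a) set \<Rightarrow> ((nat \<Rightarrow> 'a) \<Rightarrow> (nat \<Rightarrow> 'a))
     \<Rightarrow> ((nat \<Rightarrow> 'a) \<Rightarrow> (nat \<Rightarrow> 'a)) \<Rightarrow> bool" where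
  "downup_module \<alpha> \<beta> \<gamma> V D U \<longleftrightarrow> subspace_of V \<and> lin_on V D \<and> lin_on V U \<and>
     (\<forall>x\<in>V. D x \<in> V \<and> U x \<in> V) \<and>
     (\<forall>x\<in>V. D (D (U x)) = (\<lambda>n. \<alpha> * D (U (D x)) n + \<beta> * U (D (D x)) n + \<gamma> * D x n)) \<and>
     (\<forall>x\<in>V. D (U (U x)) = (\<lambda>n. \<alpha> * U (D (U x)) n + \<beta> * U (U (D x)) n + \<gamma> * U x n))"

definition simple_module ::
  "(nat \<Rightarrow> 'a::field) set \<Rightarrow> ((nat \<Rightarrow> 'a) \<Rightarrow> (nat \<Rightarrow> 'a)) \<Rightarrow> ((nat \<Rightarrow> 'a) \<Rightarrow> (nat \<Rightarrow> 'a)) \<Rightarrow> bool" where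
  "simple_module V D U \<longleftrightarrow> V \<noteq> {\<lambda>n. 0} \<and>
     (\<forall>S. S \<subseteq> V \<and> subspace_of S \<and> (\<forall>x\<in>S. D x \<in> S \<and> U x \<in> S) \<longrightarrow> S = {\<lambda>n. 0} \<or> S = V)"

definition modules_iso ::
  "(nat \<Rightarrow> 'a::field) set \<Rightarrow> ((nat \<Rightarrow> 'a) \<Rightarrow> (nat \<Rightarrow> 'a)) \<Rightarrow> ((nat \<Rightarrow> 'a) \<Rightarrow> (nat \<Rightarrow> 'a)) \<Rightarrow>
   (nat \<Rightarrow> 'a) set \<Rightarrow> ((nat \<Rightarrow> 'a) \<Rightarrow> (nat \<Rightarrow> 'a)) \<Rightarrow> ((nat \<Rightarrow> 'a) \<Rightarrow> (nat \<Rightarrow> 'a)) \<Rightarrow> bool" where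
  "modules_iso V D U V' D' U' \<longleftrightarrow> (\<exists>\<phi>. bij_betw \<phi> V V' \<and> lin_on V \<phi> \<and>
     (\<forall>x\<in>V. \<phi> (D x) = D' (\<phi> x) \<and> \<phi> (U x) = U' (\<phi> x)))"

end

theory Submission
  imports Defs
begin

text \<open>
  For every \<open>\<kappa>\<close> the operators \<open>Wd\<close>, \<open>Wu\<close> make the space of finitely supported
  sequences a module \<open>W(\<kappa>)\<close> over \<open>A(\<alpha>,-\<eta>,1)\<close>; this is exactly the recursion defining
  \<open>\<kappa>\<^sub>n\<close>.  If no \<open>\<kappa>\<^sub>n\<close> vanishes, \<open>W(\<kappa>)\<close> is simple (applying \<open>u\<close> to a nonzero vector
  reaches \<open>a\<^sub>0\<close>, applying \<open>d\<close> to \<open>a\<^sub>0\<close> reaches every basis vector), and it determines \<open>\<kappa>\<close>: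
  \<open>a\<^sub>0\<close> spans the kernel of \<open>u\<close> and \<open>u d a\<^sub>0 = \<kappa> a\<^sub>0\<close>.

  For \<open>\<alpha> = 1 + \<eta>\<close> the recursion is solved in closed form: with
  \<open>\<kappa> = 1/(\<eta>-1) - 1/(q\<eta>)\<close> one gets \<open>\<kappa>\<^sub>n = 0\<close> iff \<open>(1-(n+1)q)\<eta>\<^bsup>n+1\<^esup> = 1\<close>.  It remains to find
  infinitely many integers \<open>q\<close> avoiding all these equations.  Either every \<open>q \<ge> 1\<close> works,
  or some \<open>N = 1 - m\<^sub>0q\<^sub>0\<close> satisfies \<open>N\<eta>\<^bsup>m\<^sub>0\<^esup> = 1\<close>; then all multiples of \<open>N\<close> work, since
  a second relation \<open>M\<eta>\<^sup>m = 1\<close> with \<open>M \<equiv> 1 mod N\<close> forces \<open>N\<^sup>m = M\<^bsup>m\<^sub>0\<^esup>\<close> with \<open>N, M\<close> coprime,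
  hence \<open>N = \<plusminus>1\<close>, making \<open>\<eta>\<close> a root of unity.
\<close>

section \<open>The module \<open>W(\<kappa>)\<close>\<close>

definition basis_vec :: "nat \<Rightarrow> nat \<Rightarrow> 'a::field" where
  "basis_vec k = (\<lambda>n. if n = k then 1 else 0)"

lemma basis_vec_in_Wsp: "basis_vec k \<in> Wsp"
  by (simp add: Wsp_def basis_vec_def)

lemma basis_vec_nonzero: "basis_vec k \<noteq> (\<lambda>n. 0)"
  by (auto simp: basis_vec_def dest: fun_cong[where x=k])

lemma subspace_Wsp: "subspace_of (Wsp :: (nat \<Rightarrow> 'a::field) set)"
  unfolding subspace_of_def
proof (intro conjI ballI allI)
  show "(\<lambda>n. 0::'a) \<in> Wsp" by (simp add: Wsp_def)
next
  fix x y :: "nat \<Rightarrow> 'a" assume "x \<in> Wsp" "y \<in> Wsp"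
  then have "finite ({n. x n \<noteq> 0} \<union> {n. y n \<noteq> 0})" by (simp add: Wsp_def)
  moreover have "{n. x n + y n \<noteq> 0} \<subseteq> {n. x n \<noteq> 0} \<union> {n. y n \<noteq> 0}" by auto
  ultimately show "(\<lambda>n. x n + y n) \<in> Wsp" by (simp add: Wsp_def finite_subset)
next
  fix c and x :: "nat \<Rightarrow> 'a" assume "x \<in> Wsp"
  then show "(\<lambda>n. c * x n) \<in> Wsp" by (simp add: Wsp_def)
qed

lemma Wd_in_Wsp: "f \<in> Wsp \<Longrightarrow> Wd f \<in> Wsp"
proof -
  assume "f \<in> Wsp"
  then have "finite (Suc ` {n. f n \<noteq> 0})" by (simp add: Wsp_def)
  moreover have "{n. Wd f n \<noteq> 0} \<subseteq> Suc ` {n. f n \<noteq> 0}"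
  proof
    fix n assume "n \<in> {n. Wd f n \<noteq> 0}"
    then have "n = Suc (n - 1)" "f (n - 1) \<noteq> 0" by (auto simp: Wd_def split: if_splits)
    then show "n \<in> Suc ` {n. f n \<noteq> 0}" by blast
  qed
  ultimately show ?thesis by (simp add: Wsp_def finite_subset)
qed

lemma Wu_in_Wsp: "f \<in> Wsp \<Longrightarrow> Wu \<eta> \<alpha> \<kappa> f \<in> Wsp"
proof -
  assume "f \<in> Wsp"
  then have "finite {n. f n \<noteq> 0}" by (simp add: Wsp_def)
  then have "finite (Suc -` {n. f n \<noteq> 0})" by (rule finite_vimageI) simp
  moreover have "{n. Wu \<eta> \<alpha> \<kappa> f n \<noteq> 0} \<subseteq> Suc -` {n. f n \<noteq> 0}"
    by (auto simp: Wu_def)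
  ultimately show ?thesis by (simp add: Wsp_def finite_subset)
qed

lemma kseq_recursion:
  assumes "\<eta> \<noteq> (0::'a::field)"
  shows "\<eta> * kseq \<eta> \<alpha> \<kappa> (Suc n) =
           \<alpha> * kseq \<eta> \<alpha> \<kappa> n - (if n = 0 then 0 else kseq \<eta> \<alpha> \<kappa> (n - 1)) + 1"
  using assms by (cases n) (auto simp: field_simps)

text \<open>\<open>W(\<kappa>)\<close> is a module over \<open>A(\<alpha>,-\<eta>,1)\<close> for every \<open>\<alpha>\<close> and \<open>\<kappa>\<close>: on each basis vector
  both defining relations reduce to the recursion for \<open>\<kappa>\<^sub>n\<close>.\<close>
lemma downup_module_W:
  fixes \<eta> :: "'a::field"
  assumes "\<eta> \<noteq> 0"
  shows "downup_module \<alpha> (- \<eta>) 1 Wsp Wd (Wu \<eta> \<alpha> \<kappa>)"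
proof -
  let ?k = "kseq \<eta> \<alpha> \<kappa>" and ?u = "Wu \<eta> \<alpha> \<kappa>"
  have rel_d: "Wd (Wd (?u x)) n = \<alpha> * Wd (?u (Wd x)) n + - \<eta> * ?u (Wd (Wd x)) n + 1 * Wd x n"
    for x n
  proof (cases n)
    case 0 then show ?thesis by (simp add: Wd_def Wu_def)
  next
    case (Suc m)
    have lhs: "Wd (Wd (?u x)) n = (if m = 0 then 0 else ?k (m - 1)) * x m"
      using Suc by (cases m) (simp_all add: Wd_def Wu_def del: kseq.simps)
    have rhs: "\<alpha> * Wd (?u (Wd x)) n + - \<eta> * ?u (Wd (Wd x)) n + 1 * Wd x n
               = (\<alpha> * ?k m - \<eta> * ?k (Suc m) + 1) * x m"
      using Suc by (simp add: Wd_def Wu_def algebra_simps del: kseq.simps)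
    show ?thesis unfolding lhs rhs kseq_recursion[OF assms] by (simp add: algebra_simps)
  qed
  have rel_u: "Wd (?u (?u x)) n = \<alpha> * ?u (Wd (?u x)) n + - \<eta> * ?u (?u (Wd x)) n + 1 * ?u x n"
    for x n
  proof -
    have lhs: "Wd (?u (?u x)) n = ?k n * (if n = 0 then 0 else ?k (n - 1)) * x (Suc n)"
      by (cases n) (simp_all add: Wd_def Wu_def del: kseq.simps)
    have rhs: "\<alpha> * ?u (Wd (?u x)) n + - \<eta> * ?u (?u (Wd x)) n + 1 * ?u x n
               = ?k n * (\<alpha> * ?k n - \<eta> * ?k (Suc n) + 1) * x (Suc n)"
      by (simp add: Wd_def Wu_def algebra_simps del: kseq.simps)
    show ?thesis unfolding lhs rhs kseq_recursion[OF assms] by (simp add: algebra_simps)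
  qed
  show ?thesis
    unfolding downup_module_def
    using subspace_Wsp Wd_in_Wsp Wu_in_Wsp rel_d rel_u
    by (auto simp: lin_on_def Wd_def Wu_def algebra_simps)
qed

section \<open>Simplicity\<close>

lemma closed_funpow:
  assumes "\<forall>x\<in>S. T x \<in> S" "x \<in> S"
  shows "(T ^^ N) x \<in> S"
  using assms by (induction N) auto

lemma Wu_funpow:
  "((Wu \<eta> \<alpha> \<kappa>) ^^ N) x n = (\<Prod>i<N. kseq \<eta> \<alpha> \<kappa> (n + i)) * x (n + N)"
proof (induction N arbitrary: n)
  case 0 then show ?case by simp
next
  case (Suc N)
  have "((Wu \<eta> \<alpha> \<kappa>) ^^ Suc N) x n = kseq \<eta> \<alpha> \<kappa> n * ((Wu \<eta> \<alpha> \<kappa>) ^^ N) x (Suc n)"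
    by (simp add: Wu_def)
  also have "\<dots> = kseq \<eta> \<alpha> \<kappa> n * (\<Prod>i<N. kseq \<eta> \<alpha> \<kappa> (Suc n + i)) * x (Suc n + N)"
    by (simp add: Suc.IH)
  also have "\<dots> = (\<Prod>i<Suc N. kseq \<eta> \<alpha> \<kappa> (n + i)) * x (n + Suc N)"
    by (simp add: prod.lessThan_Suc_shift del: prod.lessThan_Suc)
  finally show ?case .
qed

lemma Wd_funpow_basis_vec: "(Wd ^^ k) (basis_vec 0) = (basis_vec k :: nat \<Rightarrow> 'a::field)"
proof (induction k)
  case 0 then show ?case by simp
next
  case (Suc k)
  have "(Wd ^^ Suc k) (basis_vec 0) = Wd (basis_vec k :: nat \<Rightarrow> 'a)" by (simp add: Suc.IH)
  also have "\<dots> = basis_vec (Suc k)" by (rule ext) (auto simp: Wd_def basis_vec_def)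
  finally show ?case .
qed

lemma Wsp_subset_if_basis_vecs:
  assumes sub: "subspace_of S" and basis: "\<And>k. basis_vec k \<in> S"
  shows "Wsp \<subseteq> S"
proof
  have restrict_in: "(\<lambda>n. if n \<in> F then f n else 0) \<in> S" if "finite F" for F and f :: "nat \<Rightarrow> 'a"
    using that
  proof (induction F rule: finite_induct)
    case empty then show ?case using sub by (simp add: subspace_of_def)
  next
    case (insert k F)
    have "(\<lambda>n. f k * basis_vec k n) \<in> S" using sub basis by (simp add: subspace_of_def)
    then have "(\<lambda>n. (if n \<in> F then f n else 0) + f k * basis_vec k n) \<in> S"
      using sub insert.IH by (simp add: subspace_of_def)
    moreover have "(\<lambda>n. (if n \<in> F then f n else 0) + f k * basis_vec k n)
                   = (\<lambda>n. if n \<in> insert k F then f n else 0)"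
      using insert.hyps by (auto simp: basis_vec_def)
    ultimately show ?case by simp
  qed
  fix f :: "nat \<Rightarrow> 'a" assume "f \<in> Wsp"
  then have "(\<lambda>n. if n \<in> {n. f n \<noteq> 0} then f n else 0) \<in> S"
    by (intro restrict_in) (simp add: Wsp_def)
  moreover have "(\<lambda>n. if n \<in> {n. f n \<noteq> 0} then f n else 0) = f" by (rule ext) simp
  ultimately show "f \<in> S" by simp
qed

text \<open>If no \<open>\<kappa>\<^sub>n\<close> vanishes, every nonzero \<open>u\<close>-stable subspace contains \<open>a\<^sub>0\<close>: apply \<open>u\<^sup>N\<close>
  where \<open>N\<close> is the top of the support, then rescale.\<close>
lemma basis_vec_0_in_submodule:
  assumes nz: "\<forall>n. kseq \<eta> \<alpha> \<kappa> n \<noteq> 0"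
    and sub: "subspace_of S" and u_closed: "\<forall>x\<in>S. Wu \<eta> \<alpha> \<kappa> x \<in> S"
    and "x \<in> S" "x \<in> Wsp" "x \<noteq> (\<lambda>n. 0)"
  shows "basis_vec 0 \<in> S"
proof -
  have fin: "finite {n. x n \<noteq> 0}" and ne: "{n. x n \<noteq> 0} \<noteq> {}"
    using \<open>x \<in> Wsp\<close> \<open>x \<noteq> (\<lambda>n. 0)\<close> by (auto simp: Wsp_def)
  define N where "N = Max {n. x n \<noteq> 0}"
  have xN: "x N \<noteq> 0" using Max_in[OF fin ne] by (simp add: N_def)
  have above: "x m = 0" if "m > N" for m
    using Max_ge[OF fin, of m] that by (fastforce simp: N_def)
  define c where "c = (\<Prod>i<N. kseq \<eta> \<alpha> \<kappa> i) * x N"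
  have "c \<noteq> 0" using nz xN by (simp add: c_def)
  have "((Wu \<eta> \<alpha> \<kappa>) ^^ N) x = (\<lambda>n. c * basis_vec 0 n)"
  proof
    fix n show "((Wu \<eta> \<alpha> \<kappa>) ^^ N) x n = c * basis_vec 0 n"
      by (cases n) (auto simp: Wu_funpow c_def above basis_vec_def)
  qed
  moreover have "((Wu \<eta> \<alpha> \<kappa>) ^^ N) x \<in> S" by (rule closed_funpow[OF u_closed \<open>x \<in> S\<close>])
  ultimately have "(\<lambda>n. inverse c * (c * basis_vec 0 n)) \<in> S"
    using sub by (simp add: subspace_of_def)
  moreover have "(\<lambda>n. inverse c * (c * basis_vec 0 n)) = basis_vec 0"
    using \<open>c \<noteq> 0\<close> by (simp add: fun_eq_iff)
  ultimately show ?thesis by simp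
qed

lemma simple_module_W:
  assumes nz: "\<forall>n. kseq \<eta> \<alpha> \<kappa> n \<noteq> 0"
  shows "simple_module Wsp Wd (Wu \<eta> \<alpha> \<kappa>)"
  unfolding simple_module_def
proof (intro conjI allI impI)
  show "Wsp \<noteq> {\<lambda>n. 0}" using basis_vec_in_Wsp basis_vec_nonzero by blast
  fix S assume "S \<subseteq> Wsp \<and> subspace_of S \<and> (\<forall>x\<in>S. Wd x \<in> S \<and> Wu \<eta> \<alpha> \<kappa> x \<in> S)"
  then have SW: "S \<subseteq> Wsp" and sub: "subspace_of S"
    and d_closed: "\<forall>x\<in>S. Wd x \<in> S" and u_closed: "\<forall>x\<in>S. Wu \<eta> \<alpha> \<kappa> x \<in> S"
    by auto
  show "S = {\<lambda>n. 0} \<or> S = Wsp"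
  proof (cases "S \<subseteq> {\<lambda>n. 0}")
    case True
    then show ?thesis using sub by (auto simp: subspace_of_def)
  next
    case False
    then obtain x where "x \<in> S" "x \<noteq> (\<lambda>n. 0)" by blast
    then have "basis_vec 0 \<in> S"
      using basis_vec_0_in_submodule[OF nz sub u_closed] SW by blast
    then have "basis_vec k \<in> S" for k
      using closed_funpow[OF d_closed, of "basis_vec 0" k] by (simp add: Wd_funpow_basis_vec)
    then show ?thesis using Wsp_subset_if_basis_vecs[OF sub] SW by blast
  qed
qed

section \<open>Non-isomorphism\<close>

lemma Wu_kernel:
  assumes nz: "\<forall>n. kseq \<eta> \<alpha> \<kappa> n \<noteq> 0" and "Wu \<eta> \<alpha> \<kappa> g = (\<lambda>n. 0)"
  shows "g (Suc n) = 0"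
  using fun_cong[OF assms(2), of n] nz by (simp add: Wu_def)

text \<open>\<open>W(\<kappa>)\<close> determines \<open>\<kappa>\<close>: an isomorphism sends \<open>a\<^sub>0\<close> to a nonzero multiple of \<open>a\<^sub>0\<close>,
  and \<open>u d a\<^sub>0 = \<kappa> a\<^sub>0\<close> then compares the two parameters.\<close>
lemma not_modules_iso_W:
  assumes nz: "\<forall>n. kseq \<eta> \<alpha> \<kappa>' n \<noteq> 0" and ne: "\<kappa> \<noteq> \<kappa>'"
  shows "\<not> modules_iso Wsp Wd (Wu \<eta> \<alpha> \<kappa>) Wsp Wd (Wu \<eta> \<alpha> \<kappa>')"
proof
  assume "modules_iso Wsp Wd (Wu \<eta> \<alpha> \<kappa>) Wsp Wd (Wu \<eta> \<alpha> \<kappa>')"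
  then obtain \<phi> where bij: "bij_betw \<phi> Wsp Wsp" and lin: "lin_on Wsp \<phi>"
    and com: "\<forall>x\<in>Wsp. \<phi> (Wd x) = Wd (\<phi> x) \<and> \<phi> (Wu \<eta> \<alpha> \<kappa> x) = Wu \<eta> \<alpha> \<kappa>' (\<phi> x)"
    unfolding modules_iso_def by blast
  let ?a0 = "basis_vec 0 :: nat \<Rightarrow> 'a" and ?z = "(\<lambda>n. 0) :: nat \<Rightarrow> 'a"
  have scale: "\<phi> (\<lambda>n. c * ?a0 n) = (\<lambda>n. c * \<phi> ?a0 n)" for c
    using lin basis_vec_in_Wsp unfolding lin_on_def by blast
  have phi_zero: "\<phi> ?z = ?z" using scale[of 0] by simp
  define g where "g = \<phi> ?a0"
  have "Wu \<eta> \<alpha> \<kappa> ?a0 = ?z" by (auto simp: Wu_def basis_vec_def)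
  then have "Wu \<eta> \<alpha> \<kappa>' g = ?z" using com basis_vec_in_Wsp phi_zero unfolding g_def by metis
  then have g_Suc: "g (Suc n) = 0" for n by (rule Wu_kernel[OF nz])
  have "g \<noteq> ?z"
  proof
    assume "g = ?z"
    then have "\<phi> ?a0 = \<phi> ?z" using phi_zero g_def by simp
    then have "?a0 = ?z"
      using bij basis_vec_in_Wsp subspace_Wsp unfolding bij_betw_def inj_on_def subspace_of_def
      by blast
    then show False using basis_vec_nonzero by blast
  qed
  then have g0: "g 0 \<noteq> 0" using g_Suc by (metis not0_implies_Suc ext)
  have "Wu \<eta> \<alpha> \<kappa> (Wd ?a0) = (\<lambda>n. \<kappa> * ?a0 n)" by (auto simp: Wu_def Wd_def basis_vec_def)
  then have "Wu \<eta> \<alpha> \<kappa>' (Wd g) = (\<lambda>n. \<kappa> * g n)"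
    using com basis_vec_in_Wsp Wd_in_Wsp scale unfolding g_def by metis
  then have "\<kappa>' * g 0 = \<kappa> * g 0" by (drule_tac fun_cong[where x=0]) (simp add: Wu_def Wd_def)
  then show False using g0 ne by simp
qed

section \<open>Closed form of \<open>\<kappa>\<^sub>n\<close> for \<open>\<alpha> = 1 + \<eta>\<close>\<close>

text \<open>Candidate closed form of \<open>\<kappa>\<^sub>n\<close> for the parameter \<open>\<kappa> = 1/(\<eta>-1) - 1/(q\<eta>)\<close>.\<close>
definition kappa_closed :: "'a::field \<Rightarrow> 'a \<Rightarrow> nat \<Rightarrow> 'a" where
  "kappa_closed \<eta> q n =
     (1 - (1 - (of_nat n + 1) * q) * \<eta>^(n+1)) / (q * \<eta>^(n+1) * (\<eta> - 1))"

lemma kappa_closed_recursion: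
  fixes \<eta> :: "'a::field"
  assumes "\<eta> \<noteq> 0" "\<eta> \<noteq> 1" "q \<noteq> 0"
  shows "inverse \<eta> * ((1 + \<eta>) * kappa_closed \<eta> q (Suc n) - kappa_closed \<eta> q n + 1)
         = kappa_closed \<eta> q (Suc (Suc n))"
proof -
  define e where "e = \<eta>^(n+1)"
  define m where "m = (of_nat n :: 'a)"
  define D where "D = q * e * (\<eta> - 1)"
  have "D \<noteq> 0" using assms by (simp add: D_def e_def)
  have k0: "kappa_closed \<eta> q n = (1 - (1 - (m + 1) * q) * e) / D"
    by (simp add: kappa_closed_def e_def m_def D_def)
  have k1: "kappa_closed \<eta> q (Suc n) = (1 - (1 - (m + 2) * q) * (\<eta> * e)) / (\<eta> * D)"
    by (simp add: kappa_closed_def e_def m_def D_def algebra_simps)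
  have k2: "kappa_closed \<eta> q (Suc (Suc n)) = (1 - (1 - (m + 3) * q) * (\<eta> * \<eta> * e)) / (\<eta> * \<eta> * D)"
    by (simp add: kappa_closed_def e_def m_def D_def algebra_simps)
  show ?thesis
    unfolding k0 k1 k2 using assms \<open>D \<noteq> 0\<close>
    by (simp add: field_simps) (simp add: D_def algebra_simps)
qed

lemma kseq_closed_form:
  fixes \<eta> :: "'a::field"
  assumes "\<eta> \<noteq> 0" "\<eta> \<noteq> 1" "q \<noteq> 0"
  shows "kseq \<eta> (1 + \<eta>) (1 / (\<eta> - 1) - 1 / (q * \<eta>)) n = kappa_closed \<eta> q n"
proof -
  let ?k = "kseq \<eta> (1 + \<eta>) (1 / (\<eta> - 1) - 1 / (q * \<eta>))"
  have "\<eta> - 1 \<noteq> 0" using assms by simp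
  have "?k n = kappa_closed \<eta> q n \<and> ?k (Suc n) = kappa_closed \<eta> q (Suc n)"
  proof (induction n)
    case 0
    show ?case using assms \<open>\<eta> - 1 \<noteq> 0\<close> by (simp add: kappa_closed_def field_simps)
  next
    case (Suc n)
    then show ?case using kappa_closed_recursion[OF assms, of n] by simp
  qed
  then show ?thesis by simp
qed

lemma kseq_closed_form_nonzero:
  fixes \<eta> :: "'a::field"
  assumes "\<eta> \<noteq> 0" "\<eta> \<noteq> 1" "q \<noteq> 0" "(1 - of_nat (Suc n) * q) * \<eta>^(Suc n) \<noteq> 1"
  shows "kseq \<eta> (1 + \<eta>) (1 / (\<eta> - 1) - 1 / (q * \<eta>)) n \<noteq> 0"
  using assms by (simp add: kseq_closed_form kappa_closed_def add.commute)

section \<open>Infinitely many admissible parameters\<close>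

definition admissible :: "'a::field_char_0 \<Rightarrow> int \<Rightarrow> bool" where
  "admissible \<eta> q \<longleftrightarrow> q \<noteq> 0 \<and> (\<forall>m::nat. m \<ge> 1 \<longrightarrow> (1 - of_nat m * of_int q) * \<eta>^m \<noteq> 1)"

text \<open>Two relations \<open>N\<eta>\<^bsup>m\<^sub>0\<^esup> = 1\<close>, \<open>M\<eta>\<^sup>m = 1\<close> with coprime integers \<open>N, M\<close> force \<open>\<eta>\<close> to be a
  root of unity: \<open>N\<^sup>m = M\<^bsup>m\<^sub>0\<^esup>\<close>, so \<open>N\<close> is a unit.\<close>
lemma coprime_relations_root_of_unity:
  fixes \<eta> :: "'a::field_char_0"
  assumes hN: "of_int N * \<eta>^m0 = 1" "m0 \<ge> 1"
    and hM: "of_int M * \<eta>^m = 1" "m \<ge> 1" and "coprime N M"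
  shows "\<exists>n>0. \<eta>^n = 1"
proof -
  have a: "of_int (N^m) * \<eta>^(m0*m) = 1"
    using arg_cong[OF hN(1), of "\<lambda>x. x^m"] by (simp add: power_mult_distrib power_mult)
  have b: "of_int (M^m0) * \<eta>^(m0*m) = 1"
    using arg_cong[OF hM(1), of "\<lambda>x. x^m0"] by (simp add: power_mult_distrib power_mult mult.commute)
  have "N^m = M^m0"
    using a b by (metis mult_right_cancel mult_zero_right of_int_eq_iff zero_neq_one)
  moreover have "coprime (N^m) (M^m0)" using \<open>coprime N M\<close> by simp
  ultimately have "is_unit (N^m)" by simp
  then have "is_unit N" using \<open>m \<ge> 1\<close> by (subst (asm) is_unit_power_iff) auto
  then have "N = 1 \<or> N = -1" by auto
  then have "\<eta>^m0 = 1 \<or> \<eta>^m0 = -1" using hN(1) by (auto simp: minus_equation_iff)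
  then have "\<eta>^(m0*2) = 1" by (auto simp: power_mult)
  then show ?thesis using \<open>m0 \<ge> 1\<close> by (intro exI[of _ "m0*2"]) auto
qed

lemma coprime_one_plus_multiple: "coprime (N::int) (1 + N * k)"
  by (metis coprime_add_one_right coprime_mult_right_iff coprime_commute add.commute)

text \<open>If \<open>\<eta>\<close> is not a root of unity there are infinitely many admissible integers: all
  \<open>q \<ge> 1\<close>, or else all positive multiples of a relation coefficient \<open>N\<close> with \<open>N\<eta>\<^bsup>m\<^sub>0\<^esup> = 1\<close>.\<close>
lemma infinite_admissible:
  fixes \<eta> :: "'a::field_char_0"
  assumes no_root: "\<forall>n::nat. n > 0 \<longrightarrow> \<eta> ^ n \<noteq> 1"
  shows "infinite {q. admissible \<eta> q}"
proof (cases "\<forall>q::int. q \<ge> 1 \<longrightarrow> admissible \<eta> q")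
  case True
  then have "{q. q \<ge> 1} \<subseteq> {q. admissible \<eta> q}" by auto
  then show ?thesis using infinite_Ici[of "1::int"] by (auto simp: atLeast_def dest: finite_subset)
next
  case False
  then obtain q0 :: int and m0 :: nat where "q0 \<ge> 1" "m0 \<ge> 1"
    and "(1 - of_nat m0 * of_int q0) * \<eta>^m0 = 1" unfolding admissible_def by auto
  define N where "N = 1 - int m0 * q0"
  have hN: "of_int N * \<eta>^m0 = 1" using \<open>(1 - _) * _ = 1\<close> by (simp add: N_def)
  then have "N \<noteq> 0" by auto
  have "admissible \<eta> (N * j)" if "j \<ge> 1" for j
    unfolding admissible_def
  proof (intro conjI allI impI notI)
    show "N * j = 0 \<Longrightarrow> False" using \<open>N \<noteq> 0\<close> that by simp
    fix m :: nat assume "m \<ge> 1" and hm: "(1 - of_nat m * of_int (N * j)) * \<eta>^m = 1"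
    define M where "M = 1 + N * (- (int m * j))"
    have "of_int M * \<eta>^m = 1" using hm by (simp add: M_def algebra_simps)
    then show False
      using coprime_relations_root_of_unity[OF hN \<open>m0 \<ge> 1\<close> _ \<open>m \<ge> 1\<close>] no_root
        coprime_one_plus_multiple[of N] unfolding M_def by blast
  qed
  then have "(\<lambda>j. N * j) ` {j. j \<ge> 1} \<subseteq> {q. admissible \<eta> q}" by auto
  moreover have "infinite ((\<lambda>j. N * j) ` {j::int. j \<ge> 1})"
    using infinite_Ici[of "1::int"] \<open>N \<noteq> 0\<close>
    by (auto simp: atLeast_def finite_image_iff inj_on_def)
  ultimately show ?thesis using finite_subset by blast
qed

definition kappa_of :: "'a::field \<Rightarrow> int \<Rightarrow> 'a" where
  "kappa_of \<eta> q = 1 / (\<eta> - 1) - 1 / (of_int q * \<eta>)"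

lemma kseq_kappa_of_nonzero:
  fixes \<eta> :: "'a::field_char_0"
  assumes "\<eta> \<noteq> 0" "\<eta> \<noteq> 1" "admissible \<eta> q"
  shows "\<forall>n. kseq \<eta> (1 + \<eta>) (kappa_of \<eta> q) n \<noteq> 0"
proof
  fix n
  have "q \<noteq> 0" and "(1 - of_nat (Suc n) * of_int q) * \<eta>^(Suc n) \<noteq> 1"
    using assms(3) unfolding admissible_def by auto
  then show "kseq \<eta> (1 + \<eta>) (kappa_of \<eta> q) n \<noteq> 0"
    unfolding kappa_of_def using kseq_closed_form_nonzero[OF assms(1,2)] by simp
qed

lemma inj_on_kappa_of:
  fixes \<eta> :: "'a::field_char_0"
  assumes "\<eta> \<noteq> 0"
  shows "inj_on (kappa_of \<eta>) {q. admissible \<eta> q}"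
proof (rule inj_onI)
  fix q r assume "q \<in> {q. admissible \<eta> q}" "r \<in> {q. admissible \<eta> q}"
    and "kappa_of \<eta> q = kappa_of \<eta> r"
  then have "inverse (of_int q * \<eta>) = inverse (of_int r * \<eta>)"
    by (simp add: kappa_of_def divide_inverse)
  then have "(of_int q :: 'a) = of_int r" using assms by simp
  then show "q = r" by simp
qed

theorem corollary4p6:
  fixes \<eta> :: "'a::field_char_0"
  assumes "\<eta> \<noteq> 0"
    and "\<forall>n::nat. n > 0 \<longrightarrow> \<eta> ^ n \<noteq> 1"
  shows "\<exists>S :: 'a set. infinite S \<and>
    (\<forall>\<kappa>\<in>S. downup_module (1 + \<eta>) (- \<eta>) 1 Wsp Wd (Wu \<eta> (1 + \<eta>) \<kappa>) \<and>
              simple_module Wsp Wd (Wu \<eta> (1 + \<eta>) \<kappa>)) \<and>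
    (\<forall>\<kappa>\<in>S. \<forall>\<kappa>'\<in>S. \<kappa> \<noteq> \<kappa>' \<longrightarrow>
       \<not> modules_iso Wsp Wd (Wu \<eta> (1 + \<eta>) \<kappa>) Wsp Wd (Wu \<eta> (1 + \<eta>) \<kappa>'))"
proof -
  have "\<eta> \<noteq> 1" using assms(2) by (metis power_one_right zero_less_one)
  define S where "S = kappa_of \<eta> ` {q. admissible \<eta> q}"
  have nonzero: "\<forall>n. kseq \<eta> (1 + \<eta>) \<kappa> n \<noteq> 0" if "\<kappa> \<in> S" for \<kappa>
    using that kseq_kappa_of_nonzero[OF assms(1) \<open>\<eta> \<noteq> 1\<close>] by (auto simp: S_def)
  have "infinite S"
    using infinite_admissible[OF assms(2)] inj_on_kappa_of[OF assms(1)]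
    by (simp add: S_def finite_image_iff)
  moreover have "downup_module (1 + \<eta>) (- \<eta>) 1 Wsp Wd (Wu \<eta> (1 + \<eta>) \<kappa>) \<and>
                 simple_module Wsp Wd (Wu \<eta> (1 + \<eta>) \<kappa>)" if "\<kappa> \<in> S" for \<kappa>
    using downup_module_W[OF assms(1)] simple_module_W[OF nonzero[OF that]] by blast
  moreover have "\<not> modules_iso Wsp Wd (Wu \<eta> (1 + \<eta>) \<kappa>) Wsp Wd (Wu \<eta> (1 + \<eta>) \<kappa>')"
    if "\<kappa>' \<in> S" "\<kappa> \<noteq> \<kappa>'" for \<kappa> \<kappa>'
    by (rule not_modules_iso_W[OF nonzero[OF that(1)] that(2)])
  ultimately show ?thesis by blast
qed

end
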